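(* Let $R$ be a commutative ring in which $2$ is invertible and let $Q$ be a free $R$-module of rank $n$ with a fixed ordered basis. Let $\varphi'$ and $\varphi^*$ be invertible symmetric $n\times n$ matrices defining quadratic forms on $Q$, with $\varphi'=\epsilon^t\varphi^*\epsilon$ for some $\epsilon\in\mathrm{GL}_n(R)$. Let $M=Q\perp\mathbb{H}(R)$, with ordered basis the basis of $Q$ followed by $x,f$, and endow $M$ with the forms of matrices $\varphi'\perp\psi_1$ and $\varphi^*\perp\psi_1$ respectively, where $\psi_1=\begin{pmatrix}0&1\\1&0\end{pmatrix}$. Then, as groups of $(n+2)\times(n+2)$ matrices, $\mathrm{ETransO}(M,\langle\,,\,\rangle_{\varphi'\perp\psi_1})=(\epsilon^{-1}\perp I_2)\,\mathrm{ETransO}(M,\langle\,,\,\rangle_{\varphi^*\perp\psi_1})\,(\epsilon\perp I_2)$.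
   Context: For an invertible symmetric matrix $\varphi$ on $Q$, $\langle a,b\rangle_\varphi=a^t\varphi b$ in coordinates and $q_\varphi(a)=\tfrac12\langle a,a\rangle_\varphi$. $\mathbb{H}(R)=Rx\oplus Rf$ with $\langle x,f\rangle=1$, $\langle x,x\rangle=\langle f,f\rangle=0$. For the form $\varphi\perp\psi_1$ on $M$ and $w\in Q$, writing elements as $(z,ax+bf)$, the elementary orthogonal transvections are $E^w_1(z,ax+bf)=(z-bw,\,(a+\langle z,w\rangle_\varphi-bq_\varphi(w))x+bf)$ and $E^w_2(z,ax+bf)=(z-aw,\,ax+(b+\langle z,w\rangle_\varphi-aq_\varphi(w))f)$; $\mathrm{ETransO}(M,\langle\,,\,\rangle_{\varphi\perp\psi_1})$ is the group generated by all $E^w_1,E^w_2$, $w\in Q$. *)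

theory Defs
  imports "Jordan_Normal_Form.Matrix"
begin

definition half :: "'a::comm_ring_1" where
  "half = (SOME h. 2 * h = 1)"

definition bil :: "'a::comm_ring_1 mat \<Rightarrow> 'a vec \<Rightarrow> 'a vec \<Rightarrow> 'a" where
  "bil phi a b = a \<bullet> (phi *\<^sub>v b)"

definition qf :: "'a::comm_ring_1 mat \<Rightarrow> 'a vec \<Rightarrow> 'a" where
  "qf phi a = half * bil phi a a"

text \<open>Elements of M = Q \<perp> H(R) are vectors of length n+2: first n coordinates z,
  then the coefficients a (of x) and b (of f).\<close>
definition zpart :: "nat \<Rightarrow> 'a vec \<Rightarrow> 'a vec" where
  "zpart n v = vec n (\<lambda>i. v $ i)"

definition E1 :: "nat \<Rightarrow> 'a::comm_ring_1 mat \<Rightarrow> 'a vec \<Rightarrow> 'a vec \<Rightarrow> 'a vec" where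
  "E1 n phi w v = (let z = zpart n v; a = v $ n; b = v $ (n+1) in
     (z - b \<cdot>\<^sub>v w) @\<^sub>v vec 2 (\<lambda>i. if i = 0 then a + bil phi z w - b * qf phi w else b))"

definition E2 :: "nat \<Rightarrow> 'a::comm_ring_1 mat \<Rightarrow> 'a vec \<Rightarrow> 'a vec \<Rightarrow> 'a vec" where
  "E2 n phi w v = (let z = zpart n v; a = v $ n; b = v $ (n+1) in
     (z - a \<cdot>\<^sub>v w) @\<^sub>v vec 2 (\<lambda>i. if i = 0 then a else b + bil phi z w - a * qf phi w))"

definition mat_of_map :: "nat \<Rightarrow> ('a::zero_neq_one vec \<Rightarrow> 'a vec) \<Rightarrow> 'a mat" where
  "mat_of_map N f = mat N N (\<lambda>(i, j). f (unit_vec N j) $ i)"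

inductive_set gen_group :: "nat \<Rightarrow> 'a::comm_ring_1 mat set \<Rightarrow> 'a mat set"
  for N :: nat and S :: "'a mat set" where
  gen_one: "1\<^sub>m N \<in> gen_group N S"
| gen_gen: "s \<in> S \<Longrightarrow> s \<in> gen_group N S"
| gen_mult: "g \<in> gen_group N S \<Longrightarrow> h \<in> gen_group N S \<Longrightarrow> g * h \<in> gen_group N S"
| gen_inv: "g \<in> gen_group N S \<Longrightarrow> h \<in> carrier_mat N N \<Longrightarrow> g * h = 1\<^sub>m N \<Longrightarrow> h * g = 1\<^sub>m N
            \<Longrightarrow> h \<in> gen_group N S"

definition ETransO :: "nat \<Rightarrow> 'a::comm_ring_1 mat \<Rightarrow> 'a mat set" where
  "ETransO n phi = gen_group (n+2)
     ({mat_of_map (n+2) (E1 n phi w) | w. w \<in> carrier_vec n} \<union>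
      {mat_of_map (n+2) (E2 n phi w) | w. w \<in> carrier_vec n})"

definition perpI2 :: "nat \<Rightarrow> 'a::comm_ring_1 mat \<Rightarrow> 'a mat" where
  "perpI2 n A = four_block_mat A (0\<^sub>m n 2) (0\<^sub>m 2 n) (1\<^sub>m 2)"

end

theory Submission
  imports Defs
begin

text \<open>Because phi' = eps^t phi* eps, the block matrix eps \<perp> I_2 is an isometry from
  (M, phi' \<perp> psi_1) onto (M, phi* \<perp> psi_1) fixing x and f, so conjugation by it turns the
  transvection E_i^w of phi' into the transvection E_i^(eps w) of phi*. As w \<mapsto> eps w is a
  bijection of Q, conjugation carries the generators of one group onto those of the other,
  and conjugation by an invertible matrix commutes with forming generated subgroups.\<close>

lemma gen_group_carrier:
  assumes "S \<subseteq> carrier_mat N N" and "g \<in> gen_group N S"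
  shows "g \<in> carrier_mat N N"
  using assms(2) by induction (use assms(1) in auto)

lemma mult_cancel_left_inverse:
  fixes P Q X :: "'a::semiring_1 mat"
  assumes "P \<in> carrier_mat N N" "Q \<in> carrier_mat N N" "P * Q = 1\<^sub>m N" "X \<in> carrier_mat N M"
  shows "P * (Q * X) = X"
  using assoc_mult_mat[of P N N Q N X M] assms by simp

lemma conj_mult_conj:
  fixes g h :: "'a::semiring_1 mat"
  assumes P: "P \<in> carrier_mat N N" and Q: "Q \<in> carrier_mat N N" and PQ: "P * Q = 1\<^sub>m N"
    and g: "g \<in> carrier_mat N N" and h: "h \<in> carrier_mat N N"
  shows "(Q * g * P) * (Q * h * P) = Q * (g * h) * P"
proof -
  have "(Q * g * P) * (Q * h * P) = Q * g * (P * (Q * (h * P)))"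
    using P Q g h by (simp add: assoc_mult_mat[of _ N N _ N _ N])
  also have "P * (Q * (h * P)) = h * P"
    using mult_cancel_left_inverse[OF P Q PQ, of "h * P" N] h P by simp
  finally show ?thesis
    using P Q g h by (simp add: assoc_mult_mat[of _ N N _ N _ N])
qed

lemma conj_conj_cancel:
  fixes s :: "'a::semiring_1 mat"
  assumes P: "P \<in> carrier_mat N N" and Q: "Q \<in> carrier_mat N N" and PQ: "P * Q = 1\<^sub>m N"
    and s: "s \<in> carrier_mat N N"
  shows "P * (Q * s * P) * Q = s"
proof -
  have "P * (Q * s * P) * Q = P * (Q * (s * (P * Q)))"
    using P Q s by (simp add: assoc_mult_mat[of _ N N _ N _ N])
  also have "\<dots> = s"
    using mult_cancel_left_inverse[OF P Q PQ s] PQ s by simp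
  finally show ?thesis .
qed

lemma conj_in_gen_group:
  assumes S: "S \<subseteq> carrier_mat N N" and P: "P \<in> carrier_mat N N" and Q: "Q \<in> carrier_mat N N"
    and PQ: "P * Q = 1\<^sub>m N" and QP: "Q * P = 1\<^sub>m N"
    and g: "g \<in> gen_group N S"
  shows "Q * g * P \<in> gen_group N ((\<lambda>s. Q * s * P) ` S)"
  using g
proof induction
  case gen_one
  then show ?case using Q QP by (simp add: gen_group.gen_one)
next
  case (gen_gen s)
  then show ?case by (simp add: gen_group.gen_gen)
next
  case (gen_mult g h)
  then have "(Q * g * P) * (Q * h * P) = Q * (g * h) * P"
    using conj_mult_conj[OF P Q PQ] gen_group_carrier[OF S] by blast
  then show ?case using gen_group.gen_mult[OF gen_mult.IH] by simp
next
  case (gen_inv g h)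
  have "g \<in> carrier_mat N N" using gen_inv.hyps(1) gen_group_carrier[OF S] by blast
  then have "(Q * g * P) * (Q * h * P) = Q * (g * h) * P" "(Q * h * P) * (Q * g * P) = Q * (h * g) * P"
    using conj_mult_conj[OF P Q PQ] gen_inv.hyps(2) by blast+
  then have "(Q * g * P) * (Q * h * P) = 1\<^sub>m N" "(Q * h * P) * (Q * g * P) = 1\<^sub>m N"
    using gen_inv.hyps(3,4) Q QP by simp_all
  moreover have "Q * h * P \<in> carrier_mat N N" using P Q gen_inv.hyps(2) by simp
  ultimately show ?case by (intro gen_group.gen_inv[OF gen_inv.IH])
qed

lemma gen_group_conj:
  assumes S: "S \<subseteq> carrier_mat N N" and P: "P \<in> carrier_mat N N" and Q: "Q \<in> carrier_mat N N"
    and PQ: "P * Q = 1\<^sub>m N" and QP: "Q * P = 1\<^sub>m N"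
  shows "gen_group N ((\<lambda>s. Q * s * P) ` S) = (\<lambda>g. Q * g * P) ` gen_group N S"
proof
  show "(\<lambda>g. Q * g * P) ` gen_group N S \<subseteq> gen_group N ((\<lambda>s. Q * s * P) ` S)"
    using conj_in_gen_group[OF S P Q PQ QP] by blast
next
  have cancel: "P * (Q * s * P) * Q = s" "Q * (P * s * Q) * P = s" if "s \<in> carrier_mat N N" for s
    using conj_conj_cancel[OF P Q PQ that] conj_conj_cancel[OF Q P QP that] by simp_all
  show "gen_group N ((\<lambda>s. Q * s * P) ` S) \<subseteq> (\<lambda>g. Q * g * P) ` gen_group N S"
  proof
    fix g assume g: "g \<in> gen_group N ((\<lambda>s. Q * s * P) ` S)"
    have S': "(\<lambda>s. Q * s * P) ` S \<subseteq> carrier_mat N N" using S P Q by auto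
    have "(\<lambda>s. P * s * Q) ` (\<lambda>s. Q * s * P) ` S = S"
      unfolding image_image using cancel(1) S by (simp add: subset_iff)
    then have "P * g * Q \<in> gen_group N S"
      using conj_in_gen_group[OF S' Q P QP PQ g] by simp
    moreover have "g = Q * (P * g * Q) * P"
      using cancel(2) gen_group_carrier[OF S' g] by simp
    ultimately show "g \<in> (\<lambda>g. Q * g * P) ` gen_group N S" by blast
  qed
qed

lemma mat_of_map_eqI:
  fixes A :: "'a::semiring_1 mat"
  assumes A: "A \<in> carrier_mat N N" and f: "\<And>v. v \<in> carrier_vec N \<Longrightarrow> f v = A *\<^sub>v v"
  shows "mat_of_map N f = A"
proof (rule eq_matI)
  fix i j assume "i < dim_row A" "j < dim_col A"
  then show "mat_of_map N f $$ (i, j) = A $$ (i, j)"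
    using A f[of "unit_vec N j"] by (simp add: mat_of_map_def)
qed (use A in \<open>auto simp: mat_of_map_def\<close>)

lemma mat_of_map_conj:
  fixes A P Q :: "'a::semiring_1 mat"
  assumes A: "A \<in> carrier_mat N N" and P: "P \<in> carrier_mat N N" and Q: "Q \<in> carrier_mat N N"
    and g: "\<And>v. v \<in> carrier_vec N \<Longrightarrow> g v = A *\<^sub>v v"
    and f: "\<And>v. v \<in> carrier_vec N \<Longrightarrow> f v = Q *\<^sub>v g (P *\<^sub>v v)"
  shows "mat_of_map N f = Q * mat_of_map N g * P"
proof -
  have "mat_of_map N f = Q * A * P"
    by (rule mat_of_map_eqI) (use A P Q f g in \<open>auto simp: assoc_mult_mat_vec[of _ N N _ N]\<close>)
  then show ?thesis using mat_of_map_eqI[OF A g] by simp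
qed

lemma image_mult_mat_vec_carrier:
  fixes A B :: "'a::semiring_1 mat"
  assumes A: "A \<in> carrier_mat n n" and B: "B \<in> carrier_mat n n" and AB: "A * B = 1\<^sub>m n"
  shows "(\<lambda>u. A *\<^sub>v u) ` carrier_vec n = carrier_vec n"
proof
  show "(\<lambda>u. A *\<^sub>v u) ` carrier_vec n \<subseteq> carrier_vec n" using A by auto
next
  show "carrier_vec n \<subseteq> (\<lambda>u. A *\<^sub>v u) ` carrier_vec n"
  proof
    fix u :: "'a vec" assume u: "u \<in> carrier_vec n"
    have "A *\<^sub>v (B *\<^sub>v u) = u"
      using A B AB u by (simp flip: assoc_mult_mat_vec)
    then show "u \<in> (\<lambda>u. A *\<^sub>v u) ` carrier_vec n"
      by (rule image_eqI[OF sym]) (use B u in simp)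
  qed
qed

lemma image_reindex_surj:
  assumes h: "h ` A = A" and f: "\<And>x. x \<in> A \<Longrightarrow> f x = g (h x)"
  shows "f ` A = g ` A"
proof -
  have "f ` A = (\<lambda>x. g (h x)) ` A" using f by (rule image_cong[OF refl])
  also have "\<dots> = g ` h ` A" by (simp only: image_image)
  finally show ?thesis unfolding h .
qed

lemma bil_congruent:
  fixes phi eps :: "'a::comm_ring_1 mat"
  assumes phi: "phi \<in> carrier_mat n n" and eps: "eps \<in> carrier_mat n n"
    and z: "z \<in> carrier_vec n" and w: "w \<in> carrier_vec n"
  shows "bil (transpose_mat eps * phi * eps) z w = bil phi (eps *\<^sub>v z) (eps *\<^sub>v w)"
proof -
  let ?u = "phi *\<^sub>v (eps *\<^sub>v w)"
  have u: "?u \<in> carrier_vec n" using phi eps w by auto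
  have "bil (transpose_mat eps * phi * eps) z w = z \<bullet> (transpose_mat eps *\<^sub>v ?u)"
    using phi eps w by (simp add: bil_def assoc_mult_mat_vec[of _ n n _ n])
  also have "\<dots> = (transpose_mat eps *\<^sub>v ?u) \<bullet> z"
    by (rule comm_scalar_prod[of _ n]) (use z eps u in auto)
  also have "\<dots> = ?u \<bullet> (eps *\<^sub>v z)"
    by (rule transpose_vec_mult_scalar[OF eps z u])
  also have "\<dots> = (eps *\<^sub>v z) \<bullet> ?u"
    by (rule comm_scalar_prod[of _ n]) (use z eps u in auto)
  finally show ?thesis by (simp add: bil_def)
qed

lemma qf_congruent:
  fixes phi eps :: "'a::comm_ring_1 mat"
  assumes "phi \<in> carrier_mat n n" "eps \<in> carrier_mat n n" "w \<in> carrier_vec n"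
  shows "qf (transpose_mat eps * phi * eps) w = qf phi (eps *\<^sub>v w)"
  using bil_congruent[OF assms assms(3)] by (simp add: qf_def)

lemma perpI2_carrier: "A \<in> carrier_mat n n \<Longrightarrow> perpI2 n A \<in> carrier_mat (n+2) (n+2)"
  unfolding perpI2_def by (rule four_block_carrier_mat) auto

lemma perpI2_mult_inverse:
  fixes A B :: "'a::comm_ring_1 mat"
  assumes "A \<in> carrier_mat n n" "B \<in> carrier_mat n n" "A * B = 1\<^sub>m n"
  shows "perpI2 n A * perpI2 n B = 1\<^sub>m (n+2)"
  unfolding perpI2_def using assms by (subst mult_four_block_mat) auto

lemma perpI2_mult_vec_append:
  fixes A :: "'a::comm_ring_1 mat"
  assumes "A \<in> carrier_mat n n" "x \<in> carrier_vec n" "y \<in> carrier_vec 2"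
  shows "perpI2 n A *\<^sub>v (x @\<^sub>v y) = (A *\<^sub>v x) @\<^sub>v y"
  unfolding perpI2_def using assms by (subst mult_mat_vec_split) auto

lemma E1_append:
  assumes "z \<in> carrier_vec n" "t \<in> carrier_vec 2"
  shows "E1 n phi w (z @\<^sub>v t) =
    (z - t $ 1 \<cdot>\<^sub>v w) @\<^sub>v vec 2 (\<lambda>i. if i = 0 then t $ 0 + bil phi z w - t $ 1 * qf phi w else t $ 1)"
proof -
  have "zpart n (z @\<^sub>v t) = z" using assms by (intro eq_vecI) (auto simp: zpart_def)
  then show ?thesis using assms unfolding E1_def Let_def by (intro eq_vecI) auto
qed

lemma E2_append:
  assumes "z \<in> carrier_vec n" "t \<in> carrier_vec 2"
  shows "E2 n phi w (z @\<^sub>v t) =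
    (z - t $ 0 \<cdot>\<^sub>v w) @\<^sub>v vec 2 (\<lambda>i. if i = 0 then t $ 0 else t $ 1 + bil phi z w - t $ 0 * qf phi w)"
proof -
  have "zpart n (z @\<^sub>v t) = z" using assms by (intro eq_vecI) (auto simp: zpart_def)
  then show ?thesis using assms unfolding E2_def Let_def by (intro eq_vecI) auto
qed

lemma left_inverse_mult_vec_diff:
  fixes A B :: "'a::comm_ring_1 mat"
  assumes A: "A \<in> carrier_mat n n" and B: "B \<in> carrier_mat n n" and BA: "B * A = 1\<^sub>m n"
    and x: "x \<in> carrier_vec n" and y: "y \<in> carrier_vec n"
  shows "B *\<^sub>v (A *\<^sub>v x - c \<cdot>\<^sub>v (A *\<^sub>v y)) = x - c \<cdot>\<^sub>v y"
proof -
  have "A *\<^sub>v x - c \<cdot>\<^sub>v (A *\<^sub>v y) = A *\<^sub>v (x - c \<cdot>\<^sub>v y)"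
    using A x y by (intro eq_vecI) (auto simp: scalar_prod_minus_distrib[of _ n])
  then show ?thesis
    using A B BA x y by (simp add: assoc_mult_mat_vec[of B n n A n, symmetric])
qed

lemma E1_congruent:
  fixes phi eps eps_inv :: "'a::comm_ring_1 mat"
  assumes phi: "phi \<in> carrier_mat n n" and eps: "eps \<in> carrier_mat n n"
    and eps_inv: "eps_inv \<in> carrier_mat n n" and inv: "eps_inv * eps = 1\<^sub>m n"
    and w: "w \<in> carrier_vec n" and v: "v \<in> carrier_vec (n+2)"
  shows "perpI2 n eps_inv *\<^sub>v E1 n phi (eps *\<^sub>v w) (perpI2 n eps *\<^sub>v v)
    = E1 n (transpose_mat eps * phi * eps) w v"
proof -
  define z t where "z = vec_first v n" and "t = vec_last v 2"
  have z: "z \<in> carrier_vec n" and t: "t \<in> carrier_vec 2" and "v = z @\<^sub>v t"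
    using v by (auto simp: z_def t_def)
  then show ?thesis
    using phi eps eps_inv inv w
    by (simp add: perpI2_mult_vec_append E1_append left_inverse_mult_vec_diff
        bil_congruent qf_congruent del: assoc_mult_mat cong: if_cong)
qed

lemma E2_congruent:
  fixes phi eps eps_inv :: "'a::comm_ring_1 mat"
  assumes phi: "phi \<in> carrier_mat n n" and eps: "eps \<in> carrier_mat n n"
    and eps_inv: "eps_inv \<in> carrier_mat n n" and inv: "eps_inv * eps = 1\<^sub>m n"
    and w: "w \<in> carrier_vec n" and v: "v \<in> carrier_vec (n+2)"
  shows "perpI2 n eps_inv *\<^sub>v E2 n phi (eps *\<^sub>v w) (perpI2 n eps *\<^sub>v v)
    = E2 n (transpose_mat eps * phi * eps) w v"
proof -
  define z t where "z = vec_first v n" and "t = vec_last v 2"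
  have z: "z \<in> carrier_vec n" and t: "t \<in> carrier_vec 2" and "v = z @\<^sub>v t"
    using v by (auto simp: z_def t_def)
  then show ?thesis
    using phi eps eps_inv inv w
    by (simp add: perpI2_mult_vec_append E2_append left_inverse_mult_vec_diff
        bil_congruent qf_congruent del: assoc_mult_mat cong: if_cong)
qed

text \<open>In block form E1_mat is [[I_n, 0, -w], [(phi w)^t, 1, -q(w)], [0, 0, 1]] and E2_mat is
  [[I_n, -w, 0], [0, 1, 0], [(phi w)^t, -q(w), 1]].\<close>

definition E1_mat :: "nat \<Rightarrow> 'a::comm_ring_1 mat \<Rightarrow> 'a vec \<Rightarrow> 'a mat" where
  "E1_mat n phi w = mat (n+2) (n+2) (\<lambda>(i,j).
     if i < n then (if j = i then 1 else 0) - (if j = n+1 then w$i else 0)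
     else if i = n then (if j < n then (phi *\<^sub>v w)$j else 0) + (if j = n then 1 else 0)
        - (if j = n+1 then qf phi w else 0)
     else (if j = n+1 then 1 else 0))"

definition E2_mat :: "nat \<Rightarrow> 'a::comm_ring_1 mat \<Rightarrow> 'a vec \<Rightarrow> 'a mat" where
  "E2_mat n phi w = mat (n+2) (n+2) (\<lambda>(i,j).
     if i < n then (if j = i then 1 else 0) - (if j = n then w$i else 0)
     else if i = n then (if j = n then 1 else 0)
     else (if j < n then (phi *\<^sub>v w)$j else 0) + (if j = n+1 then 1 else 0)
        - (if j = n then qf phi w else 0))"

lemma E1_mat_carrier: "E1_mat n phi w \<in> carrier_mat (n+2) (n+2)"
  by (simp add: E1_mat_def)

lemma E2_mat_carrier: "E2_mat n phi w \<in> carrier_mat (n+2) (n+2)"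
  by (simp add: E2_mat_def)

lemma sum_upt_add2: "(\<Sum>j\<in>{0..<n+2::nat}. f j) = (\<Sum>j\<in>{0..<n}. f j) + f n + f (n+1)"
  by (simp add: numeral_2_eq_2)

lemma sum_mult_delta:
  fixes v :: "'a::comm_ring_1 vec"
  assumes "i < n"
  shows "(\<Sum>j\<in>{0..<n}. v $ j * (if j = i then 1 else 0)) = v $ i"
  using assms by (simp add: if_distrib[of "(*) _"] cong: if_cong)

lemma E1_eq_mult_vec:
  assumes w: "w \<in> carrier_vec n" and phi: "phi \<in> carrier_mat n n" and v: "v \<in> carrier_vec (n+2)"
  shows "E1 n phi w v = E1_mat n phi w *\<^sub>v v"
proof (rule eq_vecI)
  fix i assume "i < dim_vec (E1_mat n phi w *\<^sub>v v)"
  then have i: "i < n+2" by (simp add: E1_mat_def)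
  have row: "(E1_mat n phi w *\<^sub>v v) $ i = (\<Sum>j\<in>{0..<n+2}. E1_mat n phi w $$ (i,j) * v $ j)"
    using i v by (simp add: mult_mat_vec_def scalar_prod_def E1_mat_def)
  have bil: "bil phi (zpart n v) w = (\<Sum>j\<in>{0..<n}. (phi *\<^sub>v w) $ j * v $ j)"
    using phi w by (simp add: bil_def scalar_prod_def zpart_def mult.commute)
  consider "i < n" | "i = n" | "i = n+1" using i by linarith
  then show "E1 n phi w v $ i = (E1_mat n phi w *\<^sub>v v) $ i"
    unfolding row sum_upt_add2 using w v bil
    by cases (simp_all add: E1_mat_def E1_def zpart_def Let_def sum_mult_delta algebra_simps)
qed (use w v in \<open>simp add: E1_mat_def E1_def zpart_def Let_def\<close>)

lemma E2_eq_mult_vec: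
  assumes w: "w \<in> carrier_vec n" and phi: "phi \<in> carrier_mat n n" and v: "v \<in> carrier_vec (n+2)"
  shows "E2 n phi w v = E2_mat n phi w *\<^sub>v v"
proof (rule eq_vecI)
  fix i assume "i < dim_vec (E2_mat n phi w *\<^sub>v v)"
  then have i: "i < n+2" by (simp add: E2_mat_def)
  have row: "(E2_mat n phi w *\<^sub>v v) $ i = (\<Sum>j\<in>{0..<n+2}. E2_mat n phi w $$ (i,j) * v $ j)"
    using i v by (simp add: mult_mat_vec_def scalar_prod_def E2_mat_def)
  have bil: "bil phi (zpart n v) w = (\<Sum>j\<in>{0..<n}. (phi *\<^sub>v w) $ j * v $ j)"
    using phi w by (simp add: bil_def scalar_prod_def zpart_def mult.commute)
  consider "i < n" | "i = n" | "i = n+1" using i by linarith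
  then show "E2 n phi w v $ i = (E2_mat n phi w *\<^sub>v v) $ i"
    unfolding row sum_upt_add2 using w v bil
    by cases (simp_all add: E2_mat_def E2_def zpart_def Let_def sum_mult_delta algebra_simps)
qed (use w v in \<open>simp add: E2_mat_def E2_def zpart_def Let_def\<close>)

lemma mat_of_map_E1_congruent:
  fixes phi eps eps_inv :: "'a::comm_ring_1 mat"
  assumes phi: "phi \<in> carrier_mat n n" and eps: "eps \<in> carrier_mat n n"
    and eps_inv: "eps_inv \<in> carrier_mat n n" and inv: "eps_inv * eps = 1\<^sub>m n"
    and w: "w \<in> carrier_vec n"
  shows "mat_of_map (n+2) (E1 n (transpose_mat eps * phi * eps) w) =
    perpI2 n eps_inv * mat_of_map (n+2) (E1 n phi (eps *\<^sub>v w)) * perpI2 n eps"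
proof (rule mat_of_map_conj[OF E1_mat_carrier perpI2_carrier[OF eps] perpI2_carrier[OF eps_inv]])
  show "E1 n phi (eps *\<^sub>v w) v = E1_mat n phi (eps *\<^sub>v w) *\<^sub>v v" if "v \<in> carrier_vec (n+2)" for v
    using E1_eq_mult_vec[OF _ phi that] eps w by simp
  show "E1 n (transpose_mat eps * phi * eps) w v =
      perpI2 n eps_inv *\<^sub>v E1 n phi (eps *\<^sub>v w) (perpI2 n eps *\<^sub>v v)"
    if "v \<in> carrier_vec (n+2)" for v
    using E1_congruent[OF phi eps eps_inv inv w that] by simp
qed

lemma mat_of_map_E2_congruent:
  fixes phi eps eps_inv :: "'a::comm_ring_1 mat"
  assumes phi: "phi \<in> carrier_mat n n" and eps: "eps \<in> carrier_mat n n"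
    and eps_inv: "eps_inv \<in> carrier_mat n n" and inv: "eps_inv * eps = 1\<^sub>m n"
    and w: "w \<in> carrier_vec n"
  shows "mat_of_map (n+2) (E2 n (transpose_mat eps * phi * eps) w) =
    perpI2 n eps_inv * mat_of_map (n+2) (E2 n phi (eps *\<^sub>v w)) * perpI2 n eps"
proof (rule mat_of_map_conj[OF E2_mat_carrier perpI2_carrier[OF eps] perpI2_carrier[OF eps_inv]])
  show "E2 n phi (eps *\<^sub>v w) v = E2_mat n phi (eps *\<^sub>v w) *\<^sub>v v" if "v \<in> carrier_vec (n+2)" for v
    using E2_eq_mult_vec[OF _ phi that] eps w by simp
  show "E2 n (transpose_mat eps * phi * eps) w v =
      perpI2 n eps_inv *\<^sub>v E2 n phi (eps *\<^sub>v w) (perpI2 n eps *\<^sub>v v)"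
    if "v \<in> carrier_vec (n+2)" for v
    using E2_congruent[OF phi eps eps_inv inv w that] by simp
qed

definition transvection_mats :: "nat \<Rightarrow> 'a::comm_ring_1 mat \<Rightarrow> 'a mat set" where
  "transvection_mats n phi =
     (\<lambda>w. mat_of_map (n+2) (E1 n phi w)) ` carrier_vec n \<union>
     (\<lambda>w. mat_of_map (n+2) (E2 n phi w)) ` carrier_vec n"

lemma ETransO_eq_gen_group: "ETransO n phi = gen_group (n+2) (transvection_mats n phi)"
  unfolding ETransO_def transvection_mats_def setcompr_eq_image Collect_mem_eq ..

lemma transvection_mats_carrier: "transvection_mats n phi \<subseteq> carrier_mat (n+2) (n+2)"
  by (auto simp: transvection_mats_def mat_of_map_def)

lemma transvection_mats_congruent:
  fixes phi eps eps_inv :: "'a::comm_ring_1 mat"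
  assumes phi: "phi \<in> carrier_mat n n" and eps: "eps \<in> carrier_mat n n"
    and eps_inv: "eps_inv \<in> carrier_mat n n"
    and inv1: "eps * eps_inv = 1\<^sub>m n" and inv2: "eps_inv * eps = 1\<^sub>m n"
  shows "transvection_mats n (transpose_mat eps * phi * eps) =
    (\<lambda>s. perpI2 n eps_inv * s * perpI2 n eps) ` transvection_mats n phi"
proof -
  let ?conj = "\<lambda>s. perpI2 n eps_inv * s * perpI2 n eps"
  note reindex = image_reindex_surj[OF image_mult_mat_vec_carrier[OF eps eps_inv inv1]]
  have "(\<lambda>w. mat_of_map (n+2) (E1 n (transpose_mat eps * phi * eps) w)) ` carrier_vec n =
      (\<lambda>u. ?conj (mat_of_map (n+2) (E1 n phi u))) ` carrier_vec n"
    by (rule reindex) (rule mat_of_map_E1_congruent[OF phi eps eps_inv inv2])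
  moreover have "(\<lambda>w. mat_of_map (n+2) (E2 n (transpose_mat eps * phi * eps) w)) ` carrier_vec n =
      (\<lambda>u. ?conj (mat_of_map (n+2) (E2 n phi u))) ` carrier_vec n"
    by (rule reindex) (rule mat_of_map_E2_congruent[OF phi eps eps_inv inv2])
  ultimately show ?thesis
    unfolding transvection_mats_def image_Un image_image by (rule arg_cong2[where f = "(\<union>)"])
qed

theorem mainTheorem12:
  fixes n :: nat and phi' phi_s eps eps_inv :: "'a::comm_ring_1 mat"
  assumes two_unit: "(2::'a) dvd 1"
    and phi'_carr: "phi' \<in> carrier_mat n n" and phi'_sym: "transpose_mat phi' = phi'"
    and phi'_inv: "invertible_mat phi'"
    and phis_carr: "phi_s \<in> carrier_mat n n" and phis_sym: "transpose_mat phi_s = phi_s"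
    and phis_inv: "invertible_mat phi_s"
    and eps_carr: "eps \<in> carrier_mat n n" and eps_inv_carr: "eps_inv \<in> carrier_mat n n"
    and eps_inv1: "eps * eps_inv = 1\<^sub>m n" and eps_inv2: "eps_inv * eps = 1\<^sub>m n"
    and rel: "phi' = transpose_mat eps * phi_s * eps"
  shows "ETransO n phi' =
         {perpI2 n eps_inv * g * perpI2 n eps | g. g \<in> ETransO n phi_s}"
proof -
  have "ETransO n phi' =
      gen_group (n+2) ((\<lambda>s. perpI2 n eps_inv * s * perpI2 n eps) ` transvection_mats n phi_s)"
    unfolding ETransO_eq_gen_group rel
    using transvection_mats_congruent[OF phis_carr eps_carr eps_inv_carr eps_inv1 eps_inv2] by simp
  also have "\<dots> = (\<lambda>g. perpI2 n eps_inv * g * perpI2 n eps) ` ETransO n phi_s"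
    unfolding ETransO_eq_gen_group
    by (rule gen_group_conj[OF transvection_mats_carrier perpI2_carrier[OF eps_carr]
          perpI2_carrier[OF eps_inv_carr] perpI2_mult_inverse perpI2_mult_inverse])
      (use eps_carr eps_inv_carr eps_inv1 eps_inv2 in auto)
  finally show ?thesis by blast
qed

end
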